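(* Let $\alpha\in\mathrm{relint}(\Omega)$ and $L_\alpha(x)=1-\min_ix_i/\alpha_i$. Then: 1. $L_\alpha(x)\ge0$ for all $x\in\Omega$, and $L_\alpha(x)=0$ if and only if $x=\alpha$. 2. $|L_\alpha(x_1)-L_\alpha(x_2)|\le\frac{1}{\min_i\alpha_i}\|x_1-x_2\|_\infty$ for all $x_1,x_2\in\Omega$. 3. For every fluid sample path $(\bar A,\bar X)$ (under any stationary policy) and every regular point $t$, $\frac{d}{dt}L_\alpha(\bar X[t])\le\frac{1}{\min_i\alpha_i}$.
   Context: $\Omega$ is the probability simplex in $\mathbb R^n$, and $\mathrm{relint}(\Omega)$ consists of its points with positive coordinates. Model for item 3: $K$ units move among supply locations $V_S=\{1,\dots,n\}$. In each slot exactly one customer arrives (i.i.d. types $(j',k)$, with origin $j'$ in a finite set $V_D$ and destination $k\in V_S$). Either it is served by moving one unit from a compatible location $i$ to $k$, or it is dropped, in which case the state is unchanged. Fluid sample paths: with $\bar A^K[t]=\frac1K\mathbf A^K[Kt]$ (scaled cumulative arrivals by type) and $\bar X^{K,U}[t]=\frac1K\mathbf X^{K,U}[Kt]$ (linearly interpolated), a pair $(\bar A,\bar X)$ on $[0,T]$ is an FSP under policy $U$ if some sequence of realizable scaled arrival paths, scaled initial states, and resulting state paths has a subsequence converging uniformly to $(\bar A,\bar X[0],\bar X)$. A time $t$ is regular if the FSP is differentiable at $t$. *)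

theory Defs
  imports "HOL-Analysis.Analysis" "HOL-Probability.Probability_Mass_Function"
begin

definition prob_simplex :: "(real^'n) set" where
  "prob_simplex = {x. (\<forall>i. 0 \<le> x $ i) \<and> (\<Sum>i\<in>UNIV. x $ i) = 1}"

definition relint_prob_simplex :: "(real^'n) set" where
  "relint_prob_simplex = {x. x \<in> prob_simplex \<and> (\<forall>i. 0 < x $ i)}"

definition min_coord :: "real^'n \<Rightarrow> real" where
  "min_coord a = Min (range (\<lambda>i. a $ i))"

definition L_alpha :: "real^'n \<Rightarrow> real^'n \<Rightarrow> real" where
  "L_alpha a x = 1 - Min (range (\<lambda>i. x $ i / a $ i))"

text \<open>Supply locations: the finite type 'n.  Demand origins: the finite type 'd.
  A customer type is a pair (origin, destination) :: 'd \<times> 'n.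
  cmp i j: supply location i is compatible with origin j.
  A stationary policy U maps (K, current state, arriving type) to the location
  serving the customer (Some i) or to dropping it (None).\<close>

type_synonym ('n,'d) policy = "nat \<Rightarrow> ('n \<Rightarrow> nat) \<Rightarrow> ('d \<times> 'n) \<Rightarrow> 'n option"

definition step :: "('n \<Rightarrow> 'd \<Rightarrow> bool) \<Rightarrow> ('n,'d) policy \<Rightarrow> nat \<Rightarrow> ('n \<Rightarrow> nat)
    \<Rightarrow> ('d \<times> 'n) \<Rightarrow> ('n \<Rightarrow> nat)" where
  "step cmp U K x c =
     (case U K x c of
        None \<Rightarrow> x
      | Some i \<Rightarrow> (if cmp i (fst c) \<and> 0 < x i
                   then (let y = x(i := x i - 1) in y(snd c := y (snd c) + 1))
                   else x))"

primrec state_path :: "('n \<Rightarrow> 'd \<Rightarrow> bool) \<Rightarrow> ('n,'d) policy \<Rightarrow> nat \<Rightarrow> ('n \<Rightarrow> nat)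
    \<Rightarrow> (nat \<Rightarrow> 'd \<times> 'n) \<Rightarrow> nat \<Rightarrow> ('n \<Rightarrow> nat)" where
  "state_path cmp U K x0 \<omega> 0 = x0"
| "state_path cmp U K x0 \<omega> (Suc m) =
     step cmp U K (state_path cmp U K x0 \<omega> m) (\<omega> m)"

definition arrivals :: "(nat \<Rightarrow> 'd \<times> 'n) \<Rightarrow> nat \<Rightarrow> ('d \<times> 'n) \<Rightarrow> nat" where
  "arrivals \<omega> m c = card {s. s < m \<and> \<omega> s = c}"

definition scaled_arrivals :: "nat \<Rightarrow> (nat \<Rightarrow> 'd::finite \<times> 'n::finite) \<Rightarrow> real \<Rightarrow> real^('d \<times> 'n)" where
  "scaled_arrivals K \<omega> t = (\<chi> c. real (arrivals \<omega> (nat \<lfloor>real K * t\<rfloor>) c) / real K)"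

definition scaled_state :: "('n::finite \<Rightarrow> 'd \<Rightarrow> bool) \<Rightarrow> ('n,'d) policy \<Rightarrow> nat \<Rightarrow> ('n \<Rightarrow> nat)
    \<Rightarrow> (nat \<Rightarrow> 'd \<times> 'n) \<Rightarrow> real \<Rightarrow> real^'n" where
  "scaled_state cmp U K x0 \<omega> t =
     (let m = nat \<lfloor>real K * t\<rfloor>; \<theta> = real K * t - of_int \<lfloor>real K * t\<rfloor> in
      (\<chi> i. ((1 - \<theta>) * real (state_path cmp U K x0 \<omega> m i)
              + \<theta> * real (state_path cmp U K x0 \<omega> (Suc m) i)) / real K))"

definition unif_conv_on :: "real set \<Rightarrow> (nat \<Rightarrow> real \<Rightarrow> real^'a) \<Rightarrow> (real \<Rightarrow> real^'a) \<Rightarrow> bool" where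
  "unif_conv_on S f g \<longleftrightarrow>
     (\<forall>\<epsilon>>0. \<forall>\<^sub>F r in sequentially. \<forall>t\<in>S. infnorm (f r t - g t) < \<epsilon>)"

text \<open>Fluid sample path on [0,T] under policy U, with i.i.d. arrival types
  distributed according to p: there are scales K_r \<rightarrow> \<infinity> (a subsequence),
  realizable arrival sequences (all types in the support of p), initial states
  with K_r units, such that scaled arrivals, scaled initial states and scaled
  state paths converge uniformly.\<close>
definition is_FSP :: "('d::finite \<times> 'n::finite) pmf \<Rightarrow> ('n \<Rightarrow> 'd \<Rightarrow> bool) \<Rightarrow> ('n,'d) policy \<Rightarrow> real
    \<Rightarrow> (real \<Rightarrow> real^('d \<times> 'n)) \<Rightarrow> (real \<Rightarrow> real^'n) \<Rightarrow> bool" where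
  "is_FSP p cmp U T Abar Xbar \<longleftrightarrow>
     (\<exists>Ks :: nat \<Rightarrow> nat. \<exists>\<omega>s :: nat \<Rightarrow> nat \<Rightarrow> 'd \<times> 'n. \<exists>x0s :: nat \<Rightarrow> 'n \<Rightarrow> nat.
        strict_mono Ks \<and> (\<forall>r. 0 < Ks r) \<and>
        (\<forall>r m. \<omega>s r m \<in> set_pmf p) \<and>
        (\<forall>r. (\<Sum>i\<in>UNIV. x0s r i) = Ks r) \<and>
        unif_conv_on {0..T} (\<lambda>r. scaled_arrivals (Ks r) (\<omega>s r)) Abar \<and>
        ((\<lambda>r. (\<chi> i. real (x0s r i) / real (Ks r))) \<longlonglongrightarrow> Xbar 0) \<and>
        unif_conv_on {0..T} (\<lambda>r. scaled_state cmp U (Ks r) (x0s r) (\<omega>s r)) Xbar)"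

end

theory Submission
  imports Defs
begin

text \<open>In one slot at most one unit leaves any location, so every coordinate of a scaled
  state path, and hence of a fluid sample path, decreases at rate at most 1. Lowering all
  coordinates of x by at most c lowers every ratio x_i / \<alpha>_i, and hence their minimum, by at
  most c / min_i \<alpha>_i; this gives both the Lipschitz bound and the bound on the derivative of
  L_\<alpha> along fluid sample paths. On the simplex the minimal ratio is at most 1, with equality
  only at \<alpha>, because x and \<alpha> have the same coordinate sum.\<close>

lemma min_coord_le: "min_coord a \<le> a $ i"
  unfolding min_coord_def by (intro Min_le) auto

lemma min_coord_pos:
  assumes "\<And>i. 0 < a $ i"
  shows "0 < min_coord a"
proof -
  have "min_coord a \<in> range (\<lambda>i. a $ i)"
    unfolding min_coord_def by (intro Min_in) auto
  then show ?thesis using assms by auto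
qed

lemma L_alpha_le_shift:
  fixes a x y :: "real^'n"
  assumes pos: "\<And>i. 0 < a $ i" and "0 \<le> c" and shift: "\<And>i. y $ i - c \<le> x $ i"
  shows "L_alpha a x \<le> L_alpha a y + c / min_coord a"
proof -
  have "Min (range (\<lambda>j. y $ j / a $ j)) - c / min_coord a \<le> x $ i / a $ i" for i
  proof -
    have "c / a $ i \<le> c / min_coord a"
      using min_coord_le[of a i] min_coord_pos[OF pos] pos[of i] \<open>0 \<le> c\<close>
      by (intro divide_left_mono) auto
    moreover have "(y $ i - c) / a $ i \<le> x $ i / a $ i"
      using shift[of i] pos[of i] by (intro divide_right_mono) auto
    moreover have "Min (range (\<lambda>j. y $ j / a $ j)) \<le> y $ i / a $ i" by (intro Min_le) auto
    ultimately show ?thesis by (simp only: diff_divide_distrib)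
  qed
  then have "Min (range (\<lambda>i. y $ i / a $ i)) - c / min_coord a \<le> Min (range (\<lambda>i. x $ i / a $ i))"
    by (subst Min_ge_iff) auto
  then show ?thesis unfolding L_alpha_def by linarith
qed

lemma L_alpha_lipschitz:
  fixes a x1 x2 :: "real^'n"
  assumes "\<And>i. 0 < a $ i"
  shows "\<bar>L_alpha a x1 - L_alpha a x2\<bar> \<le> infnorm (x1 - x2) / min_coord a"
proof -
  have dist: "\<bar>x1 $ i - x2 $ i\<bar> \<le> infnorm (x1 - x2)" for i
    using component_le_infnorm_cart[of "x1 - x2" i] by simp
  have "x2 $ i - infnorm (x1 - x2) \<le> x1 $ i" for i using dist[of i] by linarith
  then have "L_alpha a x1 \<le> L_alpha a x2 + infnorm (x1 - x2) / min_coord a"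
    by (rule L_alpha_le_shift[OF assms infnorm_pos_le])
  moreover have "x1 $ i - infnorm (x1 - x2) \<le> x2 $ i" for i using dist[of i] by linarith
  then have "L_alpha a x2 \<le> L_alpha a x1 + infnorm (x1 - x2) / min_coord a"
    by (rule L_alpha_le_shift[OF assms infnorm_pos_le])
  ultimately show ?thesis by linarith
qed

lemma L_alpha_nonneg_eq_0_iff:
  fixes a x :: "real^'n"
  assumes a: "a \<in> relint_prob_simplex" and x: "x \<in> prob_simplex"
  shows "0 \<le> L_alpha a x \<and> (L_alpha a x = 0 \<longleftrightarrow> x = a)"
proof -
  have pos: "\<And>i. 0 < a $ i" and asum: "(\<Sum>i\<in>UNIV. a $ i) = 1"
    and xsum: "(\<Sum>i\<in>UNIV. x $ i) = 1"
    using a x unfolding relint_prob_simplex_def prob_simplex_def by auto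
  define M where "M = Min (range (\<lambda>i. x $ i / a $ i))"
  have scaled_le: "M * a $ i \<le> x $ i" for i
  proof -
    have "M \<le> x $ i / a $ i" unfolding M_def by (intro Min_le) auto
    then show ?thesis using pos[of i] by (simp add: field_simps)
  qed
  have "M \<le> 1"
  proof (rule ccontr)
    assume "\<not> M \<le> 1"
    then have "a $ i < x $ i" for i
      using scaled_le[of i] pos[of i] mult_strict_right_mono[of 1 M "a $ i"] by linarith
    then have "(\<Sum>i\<in>UNIV. a $ i) < (\<Sum>i\<in>UNIV. x $ i)" by (intro sum_strict_mono) auto
    then show False using asum xsum by simp
  qed
  moreover have "M = 1 \<longleftrightarrow> x = a"
  proof
    assume "M = 1"
    then have "\<And>i. 0 \<le> x $ i - a $ i" using scaled_le by simp
    moreover have "(\<Sum>i\<in>UNIV. x $ i - a $ i) = 0" using asum xsum by (simp add: sum_subtractf)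
    ultimately have "\<And>i. x $ i - a $ i = 0" by (simp add: sum_nonneg_eq_0_iff)
    then show "x = a" by (simp add: vec_eq_iff)
  next
    assume "x = a"
    then have ratio_1: "x $ i / a $ i = 1" for i using pos[of i] by simp
    show "M = 1" unfolding M_def ratio_1 by simp
  qed
  ultimately show ?thesis unfolding L_alpha_def M_def[symmetric] by auto
qed

definition lin_interp :: "(nat \<Rightarrow> real) \<Rightarrow> real \<Rightarrow> real" where
  "lin_interp a u = (1 - frac u) * a (nat \<lfloor>u\<rfloor>) + frac u * a (Suc (nat \<lfloor>u\<rfloor>))"

lemma lin_interp_mono:
  assumes b: "incseq b" and "0 \<le> u" "u \<le> v"
  shows "lin_interp b u \<le> lin_interp b v"
proof -
  define m where "m = nat \<lfloor>u\<rfloor>"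
  define n where "n = nat \<lfloor>v\<rfloor>"
  have fu: "frac u = u - real m" and fv: "frac v = v - real n"
    using assms unfolding m_def n_def frac_def by simp_all
  have lu: "lin_interp b u = b m + frac u * (b (Suc m) - b m)"
    and lv: "lin_interp b v = b n + frac v * (b (Suc n) - b n)"
    unfolding lin_interp_def m_def n_def by (simp_all add: algebra_simps)
  have incr: "0 \<le> b (Suc k) - b k" for k using b by (simp add: incseq_Suc_iff)
  have "m \<le> n" unfolding m_def n_def using assms by (simp add: floor_mono nat_mono)
  then consider "m = n" | "Suc m \<le> n" by linarith
  then show ?thesis
  proof cases
    case 1
    then have "frac u \<le> frac v" using fu fv assms by simp
    then show ?thesis unfolding lu lv 1 using incr by (simp add: mult_right_mono)
  next
    case 2
    have "lin_interp b u \<le> b (Suc m)"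
      using lu incr[of m] frac_lt_1[of u] mult_left_le_one_le[of "b (Suc m) - b m" "frac u"]
      by (simp add: frac_ge_0)
    also have "b (Suc m) \<le> b n" using b 2 by (simp add: incseq_def)
    also have "b n \<le> lin_interp b v" using lv incr[of n] by (simp add: frac_ge_0)
    finally show ?thesis .
  qed
qed

lemma lin_interp_add_id:
  assumes "0 \<le> u"
  shows "lin_interp (\<lambda>m. a m + real m) u = lin_interp a u + u"
proof -
  have "real (nat \<lfloor>u\<rfloor>) + frac u = u" using assms by (simp add: frac_def)
  then show ?thesis unfolding lin_interp_def by (simp add: algebra_simps)
qed

lemma lin_interp_decrease_le:
  assumes "\<And>m. a m - 1 \<le> a (Suc m)" and "0 \<le> u" "u \<le> v"
  shows "lin_interp a u - (v - u) \<le> lin_interp a v"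
proof -
  have "incseq (\<lambda>m. a m + real m)"
    using assms(1) by (intro incseq_SucI) (simp add: algebra_simps)
  then have "lin_interp (\<lambda>m. a m + real m) u \<le> lin_interp (\<lambda>m. a m + real m) v"
    using assms(2,3) by (rule lin_interp_mono)
  then show ?thesis using assms(2,3) by (simp add: lin_interp_add_id)
qed

lemma step_ge: "real (x i) - 1 \<le> real (step cmp U K x c i)"
  unfolding step_def by (cases "U K x c") (auto simp: Let_def)

lemma scaled_state_component:
  "scaled_state cmp U K x0 \<omega> t $ i
     = lin_interp (\<lambda>m. real (state_path cmp U K x0 \<omega> m i)) (real K * t) / real K"
  unfolding scaled_state_def lin_interp_def frac_def Let_def by simp

lemma scaled_state_decrease_le:
  assumes "0 < K" "0 \<le> t" "t \<le> s"
  shows "scaled_state cmp U K x0 \<omega> t $ i - (s - t) \<le> scaled_state cmp U K x0 \<omega> s $ i"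
proof -
  let ?a = "\<lambda>m. real (state_path cmp U K x0 \<omega> m i)"
  have "?a m - 1 \<le> ?a (Suc m)" for m by (simp add: step_ge)
  then have "lin_interp ?a (real K * t) - (real K * s - real K * t) \<le> lin_interp ?a (real K * s)"
    using assms by (intro lin_interp_decrease_le) auto
  then have "(lin_interp ?a (real K * t) - real K * (s - t)) / real K \<le> lin_interp ?a (real K * s) / real K"
    using assms by (intro divide_right_mono) (auto simp: algebra_simps)
  then show ?thesis using assms by (simp add: scaled_state_component diff_divide_distrib)
qed

lemma unif_conv_on_component_LIMSEQ:
  assumes "unif_conv_on S F X" "t \<in> S"
  shows "(\<lambda>r. F r t $ i) \<longlonglongrightarrow> X t $ i"
proof (rule LIMSEQ_I)
  fix e :: real assume "0 < e"
  with assms(1) have "\<forall>\<^sub>F r in sequentially. \<forall>t\<in>S. infnorm (F r t - X t) < e"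
    unfolding unif_conv_on_def by blast
  then have "\<forall>\<^sub>F r in sequentially. infnorm (F r t - X t) < e"
    by (rule eventually_mono) (use assms(2) in blast)
  then obtain N where N: "\<And>r. r \<ge> N \<Longrightarrow> infnorm (F r t - X t) < e"
    by (auto simp: eventually_sequentially)
  have "norm (F r t $ i - X t $ i) < e" if "N \<le> r" for r
    using component_le_infnorm_cart[of "F r t - X t" i] N[OF that] by simp
  then show "\<exists>N. \<forall>r\<ge>N. norm (F r t $ i - X t $ i) < e" by blast
qed

lemma FSP_decrease_le:
  assumes "is_FSP p cmp U T Abar Xbar" "0 \<le> t" "t \<le> s" "s \<le> T"
  shows "Xbar t $ i - (s - t) \<le> Xbar s $ i"
proof -
  from assms(1) obtain Ks \<omega>s x0s where K: "\<And>r. 0 < Ks r"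
    and conv: "unif_conv_on {0..T} (\<lambda>r. scaled_state cmp U (Ks r) (x0s r) (\<omega>s r)) Xbar"
    unfolding is_FSP_def by blast
  let ?X = "\<lambda>r. scaled_state cmp U (Ks r) (x0s r) (\<omega>s r)"
  have "(\<lambda>r. ?X r t $ i - (s - t)) \<longlonglongrightarrow> Xbar t $ i - (s - t)"
    using assms by (intro tendsto_diff tendsto_const unif_conv_on_component_LIMSEQ[OF conv]) auto
  moreover have "(\<lambda>r. ?X r s $ i) \<longlonglongrightarrow> Xbar s $ i"
    using assms by (intro unif_conv_on_component_LIMSEQ[OF conv]) auto
  moreover have "\<forall>r. ?X r t $ i - (s - t) \<le> ?X r s $ i"
    using K assms(2,3) by (blast intro: scaled_state_decrease_le)
  ultimately show ?thesis by (intro LIMSEQ_le) auto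
qed

lemma has_real_derivative_le_of_right_increment_le:
  assumes "(f has_real_derivative D) (at t)" and "t < T"
    and "\<And>s. t < s \<Longrightarrow> s < T \<Longrightarrow> f s - f t \<le> C * (s - t)"
  shows "D \<le> C"
proof -
  have "(f has_real_derivative D) (at t within {t<..})"
    using assms(1) by (rule has_field_derivative_at_within)
  then have "((\<lambda>s. (f s - f t) / (s - t)) \<longlongrightarrow> D) (at_right t)"
    by (simp add: has_field_derivative_iff)
  moreover have "\<forall>\<^sub>F s in at_right t. (f s - f t) / (s - t) \<le> C"
    unfolding eventually_at_right_field
    using assms(2,3) by (intro exI[of _ T]) (auto simp: pos_divide_le_eq)
  ultimately show ?thesis by (rule tendsto_upperbound) simp
qed

theorem lemma6:
  fixes \<alpha> :: "real^'n"
  assumes "\<alpha> \<in> relint_prob_simplex"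
  shows "(\<forall>x\<in>prob_simplex. 0 \<le> L_alpha \<alpha> x \<and> (L_alpha \<alpha> x = 0 \<longleftrightarrow> x = \<alpha>))
    \<and> (\<forall>x1\<in>prob_simplex. \<forall>x2\<in>prob_simplex.
          \<bar>L_alpha \<alpha> x1 - L_alpha \<alpha> x2\<bar> \<le> infnorm (x1 - x2) / min_coord \<alpha>)
    \<and> (\<forall>(p :: ('d::finite \<times> 'n) pmf) cmp U T Abar Xbar t D.
          is_FSP p cmp U T Abar Xbar \<and> t \<in> {0<..<T}
          \<and> Abar differentiable (at t) \<and> Xbar differentiable (at t)
          \<and> ((\<lambda>s. L_alpha \<alpha> (Xbar s)) has_real_derivative D) (at t)
          \<longrightarrow> D \<le> 1 / min_coord \<alpha>)"
proof -
  have pos: "\<And>i. 0 < \<alpha> $ i" using assms unfolding relint_prob_simplex_def by auto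
  have "D \<le> 1 / min_coord \<alpha>"
    if FSP: "is_FSP p cmp U T Abar Xbar" and t: "t \<in> {0<..<T}"
      and D: "((\<lambda>s. L_alpha \<alpha> (Xbar s)) has_real_derivative D) (at t)"
    for p :: "('d \<times> 'n) pmf" and cmp U T Abar Xbar t D
  proof (rule has_real_derivative_le_of_right_increment_le[OF D])
    fix s assume "t < s" "s < T"
    then have "L_alpha \<alpha> (Xbar s) \<le> L_alpha \<alpha> (Xbar t) + (s - t) / min_coord \<alpha>"
      using t by (intro L_alpha_le_shift pos FSP_decrease_le[OF FSP]) auto
    then show "L_alpha \<alpha> (Xbar s) - L_alpha \<alpha> (Xbar t) \<le> 1 / min_coord \<alpha> * (s - t)" by simp
  qed (use t in auto)
  then show ?thesis
    using L_alpha_nonneg_eq_0_iff[OF assms] L_alpha_lipschitz[OF pos] by blast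
qed

end
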